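(* Let $G$ be a torsion-free abelian group, let $\mathfrak{F}$ be a set freely generating a free group $\langle\mathfrak{F}\rangle$, and let $\pi:\mathfrak{F}\to\mathrm{pAut}\,G$ be a map, extended to reduced words as follows: for a reduced word $\varphi=\varphi_1\cdots\varphi_n$ with $\varphi_i\in\mathfrak{F}\cup\mathfrak{F}^{-1}$ put $\pi(\varphi)=\pi(\varphi_1)\cdots\pi(\varphi_n)$ (composition of partial automorphisms, with $\pi(\psi^{-1})=\pi(\psi)^{-1}$ the weak inverse, and $\pi(1)=\mathrm{id}_G$ for the empty word). Then $\pi$ has the U-property if and only if every reduced $\varphi\in\langle\mathfrak{F}\rangle$ such that $x\pi(\varphi)=x$ for some $x\in\mathrm{Dom}\,\pi(\varphi)\cap{\mathfrak p}G$ satisfies $\varphi=1$.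
   Context: A partial automorphism of $G$ is an isomorphism $\varphi:\mathrm{Dom}\,\varphi\to\mathrm{Im}\,\varphi$ between subgroups of $G$, acting on the right; $\mathrm{pAut}\,G$ is the set of partial automorphisms with $G/\mathrm{Dom}\,\varphi$ and $G/\mathrm{Im}\,\varphi$ both $\aleph_1$-free (every countable subgroup free). Composition: $\mathrm{Dom}(\varphi\psi)=(\mathrm{Im}\,\varphi\cap\mathrm{Dom}\,\psi)\varphi^{-1}$, $x(\varphi\psi)=(x\varphi)\psi$; the weak inverse $\varphi^{-1}$ is the inverse isomorphism $\mathrm{Im}\,\varphi\to\mathrm{Dom}\,\varphi$. ${\mathfrak p}G$ is the set of nonzero $g\in G$ such that $nx=g$ has no solution $x\in G$ for any integer $n\ge2$. $\pi$ has the U-property if for all reduced $\varphi,\varphi'\in\langle\mathfrak{F}\rangle$ with $x\pi(\varphi)=x\pi(\varphi')$ for some $x\in\mathrm{Dom}\,\pi(\varphi)\cap\mathrm{Dom}\,\pi(\varphi')\cap{\mathfrak p}G$ we have $\varphi=\varphi'$. *)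

theory Defs
  imports "HOL-Algebra.Free_Abelian_Groups" "HOL-Library.Countable_Set"
begin

text \<open>The abelian group G is a HOL-Algebra commutative group, written multiplicatively:
  the additive n x of the paper is x [^] n, and 0 is the unit.\<close>

definition torsion_free :: "('g, 'b) monoid_scheme \<Rightarrow> bool" where
  "torsion_free G \<longleftrightarrow>
     (\<forall>x \<in> carrier G. \<forall>n::nat. n > 0 \<longrightarrow> x [^]\<^bsub>G\<^esub> n = \<one>\<^bsub>G\<^esub> \<longrightarrow> x = \<one>\<^bsub>G\<^esub>)"

text \<open>An abelian group A is free if it is isomorphic to a free abelian group on some set;
  the basis can be taken inside A itself, so its type is the element type of A.\<close>
definition free_abelian :: "('a, 'b) monoid_scheme \<Rightarrow> bool" where
  "free_abelian A \<longleftrightarrow> (\<exists>S :: 'a set. A \<cong> free_Abelian_group S)"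

definition aleph1_free :: "('a, 'b) monoid_scheme \<Rightarrow> bool" where
  "aleph1_free A \<longleftrightarrow>
     (\<forall>K. subgroup K A \<and> countable K \<longrightarrow> free_abelian (A\<lparr>carrier := K\<rparr>))"

type_synonym 'g pmap = "'g \<Rightarrow> 'g option"

definition partial_automorphism :: "('g, 'b) monoid_scheme \<Rightarrow> 'g pmap \<Rightarrow> bool" where
  "partial_automorphism G \<phi> \<longleftrightarrow>
     subgroup (dom \<phi>) G \<and> subgroup (ran \<phi>) G \<and> inj_on \<phi> (dom \<phi>) \<and>
     (\<forall>x \<in> dom \<phi>. \<forall>y \<in> dom \<phi>.
        the (\<phi> (x \<otimes>\<^bsub>G\<^esub> y)) = the (\<phi> x) \<otimes>\<^bsub>G\<^esub> the (\<phi> y))"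

definition pAut :: "('g, 'b) monoid_scheme \<Rightarrow> 'g pmap set" where
  "pAut G = {\<phi>. partial_automorphism G \<phi> \<and>
                 aleph1_free (G Mod (dom \<phi>)) \<and> aleph1_free (G Mod (ran \<phi>))}"

text \<open>Composition with right action: x(\<phi>\<psi>) = (x\<phi>)\<psi>.\<close>
definition pcomp :: "'g pmap \<Rightarrow> 'g pmap \<Rightarrow> 'g pmap" where
  "pcomp \<phi> \<psi> = (\<lambda>x. case \<phi> x of None \<Rightarrow> None | Some y \<Rightarrow> \<psi> y)"

definition pinv :: "'g pmap \<Rightarrow> 'g pmap" where
  "pinv \<phi> = (\<lambda>y. if y \<in> ran \<phi> then Some (THE x. \<phi> x = Some y) else None)"

definition pid :: "('g, 'b) monoid_scheme \<Rightarrow> 'g pmap" where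
  "pid G = (\<lambda>x. if x \<in> carrier G then Some x else None)"

definition pG :: "('g, 'b) monoid_scheme \<Rightarrow> 'g set" where
  "pG G = {g \<in> carrier G. g \<noteq> \<one>\<^bsub>G\<^esub> \<and>
             (\<forall>n::nat. n \<ge> 2 \<longrightarrow> \<not> (\<exists>x \<in> carrier G. x [^]\<^bsub>G\<^esub> n = g))}"

text \<open>Words in the free group on F: letters (f, True) = f, (f, False) = f^-1.
  Reduced words (no adjacent f f^-1 or f^-1 f) are exactly the elements of the free group;
  the identity 1 is the empty word.\<close>
definition reduced_word :: "'f set \<Rightarrow> ('f \<times> bool) list \<Rightarrow> bool" where
  "reduced_word F w \<longleftrightarrow> (\<forall>a \<in> set w. fst a \<in> F) \<and>
     (\<forall>i. Suc i < length w \<longrightarrow>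
        \<not> (fst (w ! i) = fst (w ! Suc i) \<and> snd (w ! i) \<noteq> snd (w ! Suc i)))"

definition letter_map :: "('f \<Rightarrow> 'g pmap) \<Rightarrow> 'f \<times> bool \<Rightarrow> 'g pmap" where
  "letter_map \<pi> a = (if snd a then \<pi> (fst a) else pinv (\<pi> (fst a)))"

fun word_map :: "('g, 'b) monoid_scheme \<Rightarrow> ('f \<Rightarrow> 'g pmap) \<Rightarrow> ('f \<times> bool) list \<Rightarrow> 'g pmap" where
  "word_map G \<pi> [] = pid G"
| "word_map G \<pi> [a] = letter_map \<pi> a"
| "word_map G \<pi> (a # w) = pcomp (letter_map \<pi> a) (word_map G \<pi> w)"

definition U_property :: "('g, 'b) monoid_scheme \<Rightarrow> 'f set \<Rightarrow> ('f \<Rightarrow> 'g pmap) \<Rightarrow> bool" where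
  "U_property G F \<pi> \<longleftrightarrow>
     (\<forall>\<phi> \<phi>'. reduced_word F \<phi> \<and> reduced_word F \<phi>' \<and>
        (\<exists>x \<in> dom (word_map G \<pi> \<phi>) \<inter> dom (word_map G \<pi> \<phi>') \<inter> pG G.
            word_map G \<pi> \<phi> x = word_map G \<pi> \<phi>' x) \<longrightarrow> \<phi> = \<phi>')"

end

theory Submission
  imports Defs
begin

text \<open>If two reduced words \<phi>, \<phi>' send a point x to the same point, strip their longest
  common final segment: every letter acts injectively, so the remaining words \<psi>, \<psi>' still agree
  at x, and since their last letters differ, \<psi>\<psi>'\<inverse> is a reduced word fixing x. Hence if only the
  empty word fixes x, then \<phi> = \<phi>'. Conversely, the empty word fixes every point, so the
  U-property applied to \<phi> and the empty word shows that only the empty word fixes a point of pG.\<close>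

definition partial_injection :: "('g, 'b) monoid_scheme \<Rightarrow> 'g pmap \<Rightarrow> bool" where
  "partial_injection G \<phi> \<longleftrightarrow> dom \<phi> \<subseteq> carrier G \<and> ran \<phi> \<subseteq> carrier G \<and> inj_on \<phi> (dom \<phi>)"

lemma partial_injection_eq:
  "partial_injection G \<phi> \<Longrightarrow> \<phi> x = Some z \<Longrightarrow> \<phi> x' = Some z \<Longrightarrow> x = x'"
  unfolding partial_injection_def inj_on_def by (metis domI)

lemma pAut_partial_injection: "\<phi> \<in> pAut G \<Longrightarrow> partial_injection G \<phi>"
  unfolding pAut_def partial_automorphism_def partial_injection_def
  by (auto dest: subgroup.subset)

lemma pcomp_eq_Some_iff: "pcomp \<phi> \<psi> x = Some z \<longleftrightarrow> (\<exists>y. \<phi> x = Some y \<and> \<psi> y = Some z)"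
  by (simp add: pcomp_def split: option.split)

lemma pcomp_assoc: "pcomp (pcomp \<phi> \<psi>) \<chi> = pcomp \<phi> (pcomp \<psi> \<chi>)"
  by (simp add: pcomp_def fun_eq_iff split: option.split)

lemma pcomp_pid_left: "dom \<phi> \<subseteq> carrier G \<Longrightarrow> pcomp (pid G) \<phi> = \<phi>"
  by (force simp: pcomp_def pid_def fun_eq_iff domIff subset_iff)

lemma pcomp_pid_right: "ran \<phi> \<subseteq> carrier G \<Longrightarrow> pcomp \<phi> (pid G) = \<phi>"
  by (force simp: pcomp_def pid_def fun_eq_iff ran_def subset_iff split: option.split)

lemma pinv_eq_Some_iff:
  assumes "inj_on \<phi> (dom \<phi>)"
  shows "pinv \<phi> y = Some x \<longleftrightarrow> \<phi> x = Some y"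
proof (cases "y \<in> ran \<phi>")
  case True
  then obtain x0 where x0: "\<phi> x0 = Some y" by (auto simp: ran_def)
  have "(THE x. \<phi> x = Some y) = x0"
  proof (rule the_equality)
    show "x' = x0" if "\<phi> x' = Some y" for x'
      using inj_onD[OF assms] that x0 by (metis domI)
  qed (fact x0)
  then have "pinv \<phi> y = Some x0" using True by (simp add: pinv_def)
  moreover have "\<phi> x = Some y \<longleftrightarrow> x = x0"
    using x0 inj_onD[OF assms] by (metis domI)
  ultimately show ?thesis by auto
next
  case False
  then show ?thesis by (auto simp: pinv_def ranI)
qed

lemma partial_injection_pinv:
  assumes "partial_injection G \<phi>"
  shows "partial_injection G (pinv \<phi>)"
proof -
  have inj: "inj_on \<phi> (dom \<phi>)" using assms by (simp add: partial_injection_def)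
  have "dom (pinv \<phi>) = ran \<phi>"
    unfolding pinv_def dom_def by simp
  moreover have "ran (pinv \<phi>) = dom \<phi>"
    by (auto simp: ran_def pinv_eq_Some_iff[OF inj])
  moreover have "inj_on (pinv \<phi>) (dom (pinv \<phi>))"
  proof (rule inj_onI)
    fix y y' assume "y \<in> dom (pinv \<phi>)" and "pinv \<phi> y = pinv \<phi> y'"
    then obtain x where "pinv \<phi> y = Some x" "pinv \<phi> y' = Some x" by (metis domD)
    then show "y = y'" by (simp add: pinv_eq_Some_iff[OF inj])
  qed
  ultimately show ?thesis using assms by (simp add: partial_injection_def)
qed

lemma partial_injection_pcomp:
  assumes "partial_injection G \<phi>" and "partial_injection G \<psi>"
  shows "partial_injection G (pcomp \<phi> \<psi>)"
proof -
  have "dom (pcomp \<phi> \<psi>) \<subseteq> dom \<phi>" "ran (pcomp \<phi> \<psi>) \<subseteq> ran \<psi>"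
    by (auto simp: pcomp_def ran_def pcomp_eq_Some_iff split: option.splits)
  moreover have "inj_on (pcomp \<phi> \<psi>) (dom (pcomp \<phi> \<psi>))"
  proof (rule inj_onI)
    fix x x' assume "x \<in> dom (pcomp \<phi> \<psi>)" and "pcomp \<phi> \<psi> x = pcomp \<phi> \<psi> x'"
    then obtain z where "pcomp \<phi> \<psi> x = Some z" "pcomp \<phi> \<psi> x' = Some z" by (metis domD)
    then obtain y y' where "\<phi> x = Some y" "\<psi> y = Some z" "\<phi> x' = Some y'" "\<psi> y' = Some z"
      unfolding pcomp_eq_Some_iff by blast
    then show "x = x'" using assms by (metis partial_injection_eq)
  qed
  ultimately show ?thesis using assms by (auto simp: partial_injection_def)
qed

lemma partial_injection_pid: "partial_injection G (pid G)"
  by (auto simp: partial_injection_def pid_def dom_def ran_def inj_on_def split: if_splits)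

definition flip_letter :: "'f \<times> bool \<Rightarrow> 'f \<times> bool" where
  "flip_letter a = (fst a, \<not> snd a)"

definition inv_word :: "('f \<times> bool) list \<Rightarrow> ('f \<times> bool) list" where
  "inv_word w = rev (map flip_letter w)"

lemma reduced_word_iff_successively:
  "reduced_word F w \<longleftrightarrow> (\<forall>a \<in> set w. fst a \<in> F) \<and> successively (\<lambda>a b. b \<noteq> flip_letter a) w"
  unfolding reduced_word_def successively_conv_nth flip_letter_def by (auto simp: prod_eq_iff)

lemma reduced_word_inv_word: "reduced_word F w \<Longrightarrow> reduced_word F (inv_word w)"
  unfolding reduced_word_iff_successively inv_word_def successively_rev successively_map
  by (auto simp: flip_letter_def elim!: successively_mono)

lemma reduced_word_appendD: "reduced_word F (u @ v) \<Longrightarrow> reduced_word F u"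
  unfolding reduced_word_iff_successively successively_append_iff by auto

lemma reduced_word_append_inv_word:
  assumes "reduced_word F u" and "reduced_word F v" and "u \<noteq> [] \<Longrightarrow> v \<noteq> [] \<Longrightarrow> last u \<noteq> last v"
  shows "reduced_word F (u @ inv_word v)"
  using assms reduced_word_inv_word[OF assms(2)]
  unfolding reduced_word_iff_successively successively_append_iff
  by (auto simp: inv_word_def hd_rev last_map flip_letter_def prod_eq_iff)

context
  fixes G :: "('g, 'b) monoid_scheme" and F :: "'f set" and \<pi> :: "'f \<Rightarrow> 'g pmap"
  assumes partial_injection_letters: "\<And>f. f \<in> F \<Longrightarrow> partial_injection G (\<pi> f)"
begin

lemma partial_injection_letter_map: "fst a \<in> F \<Longrightarrow> partial_injection G (letter_map \<pi> a)"
  by (simp add: letter_map_def partial_injection_letters partial_injection_pinv)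

lemma letter_map_flip_letter:
  assumes "fst a \<in> F"
  shows "letter_map \<pi> (flip_letter a) y = Some x \<longleftrightarrow> letter_map \<pi> a x = Some y"
  using partial_injection_letters[OF assms]
  by (auto simp: letter_map_def flip_letter_def partial_injection_def pinv_eq_Some_iff)

lemma word_map_Cons:
  assumes "fst a \<in> F"
  shows "word_map G \<pi> (a # w) = pcomp (letter_map \<pi> a) (word_map G \<pi> w)"
proof (cases w)
  case Nil
  have "ran (letter_map \<pi> a) \<subseteq> carrier G"
    using partial_injection_letter_map[OF assms] by (simp add: partial_injection_def)
  then show ?thesis by (simp add: Nil pcomp_pid_right)
qed simp

lemma partial_injection_word_map:
  "\<forall>a \<in> set w. fst a \<in> F \<Longrightarrow> partial_injection G (word_map G \<pi> w)"
  by (induction w)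
    (simp_all add: word_map_Cons partial_injection_pid partial_injection_pcomp partial_injection_letter_map)

lemma word_map_append:
  assumes "\<forall>a \<in> set u. fst a \<in> F" and "\<forall>a \<in> set v. fst a \<in> F"
  shows "word_map G \<pi> (u @ v) = pcomp (word_map G \<pi> u) (word_map G \<pi> v)"
  using assms(1)
proof (induction u)
  case Nil
  have "dom (word_map G \<pi> v) \<subseteq> carrier G"
    using partial_injection_word_map[OF assms(2)] by (simp add: partial_injection_def)
  then show ?case by (simp add: pcomp_pid_left)
next
  case (Cons a u)
  then show ?case by (simp add: word_map_Cons pcomp_assoc)
qed

lemma word_map_snoc:
  "\<forall>b \<in> set w. fst b \<in> F \<Longrightarrow> fst a \<in> F \<Longrightarrow>
    word_map G \<pi> (w @ [a]) = pcomp (word_map G \<pi> w) (letter_map \<pi> a)"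
  by (simp add: word_map_append)

lemma word_map_inv_word:
  "\<forall>a \<in> set w. fst a \<in> F \<Longrightarrow> word_map G \<pi> w x = Some y \<Longrightarrow> word_map G \<pi> (inv_word w) y = Some x"
proof (induction w arbitrary: x)
  case Nil
  then show ?case by (auto simp: pid_def inv_word_def split: if_splits)
next
  case (Cons a w)
  then obtain z where z: "letter_map \<pi> a x = Some z" "word_map G \<pi> w z = Some y"
    by (auto simp: word_map_Cons pcomp_eq_Some_iff)
  have "fst (flip_letter a) \<in> F" and "\<forall>b \<in> set (inv_word w). fst b \<in> F"
    using Cons.prems(1) by (auto simp: inv_word_def flip_letter_def)
  from word_map_snoc[OF this(2,1)]
  have "word_map G \<pi> (inv_word (a # w)) =
      pcomp (word_map G \<pi> (inv_word w)) (letter_map \<pi> (flip_letter a))"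
    by (simp add: inv_word_def)
  with Cons z show ?case by (simp add: pcomp_eq_Some_iff letter_map_flip_letter)
qed

lemma reduced_word_eq_if_word_maps_agree:
  assumes only_empty_fixes: "\<And>\<psi>. reduced_word F \<psi> \<Longrightarrow> word_map G \<pi> \<psi> x = Some x \<Longrightarrow> \<psi> = []"
    and "reduced_word F \<phi>" and "reduced_word F \<phi>'"
    and "word_map G \<pi> \<phi> x = Some z" and "word_map G \<pi> \<phi>' x = Some z"
  shows "\<phi> = \<phi>'"
  using assms(2-5)
proof (induction \<phi> arbitrary: \<phi>' z rule: rev_induct)
  case Nil
  then have "z = x" by (auto simp: pid_def split: if_splits)
  then have "\<phi>' = []" using Nil only_empty_fixes by simp
  then show ?case by simp
next
  case (snoc a \<phi>)
  have letters: "\<forall>b \<in> set \<phi>. fst b \<in> F" "fst a \<in> F" "\<forall>b \<in> set \<phi>'. fst b \<in> F"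
    using snoc.prems(1,2) by (auto simp: reduced_word_def)
  obtain y where y: "word_map G \<pi> \<phi> x = Some y" "letter_map \<pi> a y = Some z"
    using snoc.prems(3) letters by (auto simp: word_map_snoc pcomp_eq_Some_iff)
  show ?case
  proof (cases "\<phi>' \<noteq> [] \<and> last \<phi>' = a")
    case True
    then obtain \<phi>'' where \<phi>': "\<phi>' = \<phi>'' @ [a]"
      by (metis append_butlast_last_id)
    then obtain y' where y': "word_map G \<pi> \<phi>'' x = Some y'" "letter_map \<pi> a y' = Some z"
      using snoc.prems(4) letters by (auto simp: word_map_snoc pcomp_eq_Some_iff)
    have "y' = y"
      using partial_injection_letter_map[OF letters(2)] y'(2) y(2) by (rule partial_injection_eq)
    then have "\<phi> = \<phi>''"
      using snoc.IH[of \<phi>'' y] snoc.prems(1,2) \<phi>' y y' reduced_word_appendD by blast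
    then show ?thesis using \<phi>' by simp
  next
    case False
    then have "reduced_word F ((\<phi> @ [a]) @ inv_word \<phi>')"
      using snoc.prems(1,2) by (intro reduced_word_append_inv_word) auto
    moreover have "word_map G \<pi> ((\<phi> @ [a]) @ inv_word \<phi>') =
        pcomp (word_map G \<pi> (\<phi> @ [a])) (word_map G \<pi> (inv_word \<phi>'))"
      using snoc.prems(1) reduced_word_inv_word[OF snoc.prems(2)]
      by (intro word_map_append) (simp_all add: reduced_word_def)
    then have "word_map G \<pi> ((\<phi> @ [a]) @ inv_word \<phi>') x = Some x"
      using snoc.prems(3) word_map_inv_word[OF letters(3) snoc.prems(4)]
      by (simp add: pcomp_eq_Some_iff)
    ultimately show ?thesis using only_empty_fixes by fastforce
  qed
qed

lemma U_property_if_only_empty_word_fixes: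
  assumes only_empty_fixes:
    "\<And>\<phi> x. x \<in> pG G \<Longrightarrow> reduced_word F \<phi> \<Longrightarrow> word_map G \<pi> \<phi> x = Some x \<Longrightarrow> \<phi> = []"
  shows "U_property G F \<pi>"
  unfolding U_property_def
proof (intro allI impI, elim conjE bexE)
  fix \<phi> \<phi>' x
  assume reduced: "reduced_word F \<phi>" "reduced_word F \<phi>'"
    and x: "x \<in> dom (word_map G \<pi> \<phi>) \<inter> dom (word_map G \<pi> \<phi>') \<inter> pG G"
    and agree: "word_map G \<pi> \<phi> x = word_map G \<pi> \<phi>' x"
  obtain z where z: "word_map G \<pi> \<phi> x = Some z" "word_map G \<pi> \<phi>' x = Some z"
    using x agree by auto
  have "x \<in> pG G" using x by simp
  from reduced_word_eq_if_word_maps_agree[OF only_empty_fixes[OF this] reduced z]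
  show "\<phi> = \<phi>'" .
qed

end

lemma only_empty_word_fixes_if_U_property:
  assumes "U_property G F \<pi>"
    and "x \<in> pG G" and "reduced_word F \<phi>" and "word_map G \<pi> \<phi> x = Some x"
  shows "\<phi> = []"
proof -
  have "reduced_word F []" and "word_map G \<pi> [] x = Some x"
    using assms(2) by (auto simp: reduced_word_def pG_def pid_def)
  with assms(2-4) have "reduced_word F \<phi> \<and> reduced_word F [] \<and>
      (\<exists>x \<in> dom (word_map G \<pi> \<phi>) \<inter> dom (word_map G \<pi> []) \<inter> pG G.
        word_map G \<pi> \<phi> x = word_map G \<pi> [] x)"
    by (intro conjI bexI[of _ x]) (auto simp: domIff)
  then show "\<phi> = []"
    by (rule assms(1)[unfolded U_property_def, rule_format])
qed

theorem proposition3p10: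
  fixes G :: "('g, 'b) monoid_scheme" and F :: "'f set" and \<pi> :: "'f \<Rightarrow> 'g pmap"
  assumes "comm_group G" and "torsion_free G"
    and "\<forall>f \<in> F. \<pi> f \<in> pAut G"
  shows "U_property G F \<pi> \<longleftrightarrow>
    (\<forall>\<phi>. reduced_word F \<phi> \<and>
        (\<exists>x \<in> dom (word_map G \<pi> \<phi>) \<inter> pG G. word_map G \<pi> \<phi> x = Some x) \<longrightarrow> \<phi> = [])"
proof
  assume U: "U_property G F \<pi>"
  show "\<forall>\<phi>. reduced_word F \<phi> \<and>
      (\<exists>x \<in> dom (word_map G \<pi> \<phi>) \<inter> pG G. word_map G \<pi> \<phi> x = Some x) \<longrightarrow> \<phi> = []"
  proof (intro allI impI, elim conjE bexE IntE)
    fix \<phi> x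
    assume "x \<in> pG G" "reduced_word F \<phi>" "word_map G \<pi> \<phi> x = Some x"
    then show "\<phi> = []" by (rule only_empty_word_fixes_if_U_property[OF U])
  qed
next
  assume only_empty_fixes: "\<forall>\<phi>. reduced_word F \<phi> \<and>
      (\<exists>x \<in> dom (word_map G \<pi> \<phi>) \<inter> pG G. word_map G \<pi> \<phi> x = Some x) \<longrightarrow> \<phi> = []"
  have "\<And>f. f \<in> F \<Longrightarrow> partial_injection G (\<pi> f)"
    using assms(3) by (simp add: pAut_partial_injection)
  then show "U_property G F \<pi>"
  proof (rule U_property_if_only_empty_word_fixes)
    fix \<phi> x
    assume "x \<in> pG G" "reduced_word F \<phi>" "word_map G \<pi> \<phi> x = Some x"
    then have "reduced_word F \<phi> \<and>
        (\<exists>x \<in> dom (word_map G \<pi> \<phi>) \<inter> pG G. word_map G \<pi> \<phi> x = Some x)"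
      by (intro conjI bexI[of _ x]) (auto simp: domIff)
    then show "\<phi> = []" by (rule only_empty_fixes[rule_format])
  qed
qed

end
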